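(* Consider Algorithm 1 (delay-tolerant integer flow balancing, described in the context) run on a strongly connected digraph $\mathcal{G}_d$ with edge bounds $l_{ji},u_{ji}$, under any realization of transmission delays bounded by $\overline{\tau}<\infty$. Let $\mathcal{V}^-[k]=\{v_j\in\mathcal{V}: b_j[k]<0\}$. Then for every $k\ge 0$, $\mathcal{V}^-[k+1]\subseteq\mathcal{V}^-[k]$.
   Context: Setting: $\mathcal{G}_d=(\mathcal{V},\mathcal{E})$ is a strongly connected digraph, $\mathcal{V}=\{v_1,\dots,v_n\}$, $n\ge2$; an edge $(v_j,v_i)$ carries flow from $v_i$ to $v_j$. $\mathcal{N}_j^-=\{v_i:(v_j,v_i)\in\mathcal{E}\}$, $\mathcal{N}_j^+=\{v_l:(v_l,v_j)\in\mathcal{E}\}$, $\mathcal{D}_j=|\mathcal{N}_j^-|+|\mathcal{N}_j^+|$. Each edge has real bounds $1\le l_{ji}\le u_{ji}$. Communication is bidirectional along every edge. Projection: $[x]_{ji}=\max\{\lceil l_{ji}\rceil,\min\{\lfloor u_{ji}\rfloor,x\}\}$. State: for each edge $(v_l,v_j)$, the tail $v_j$ holds the actual flow $f_{lj}[k]$; for each edge $(v_j,v_i)$, the head $v_j$ holds a perceived flow $f^{(p)}_{ji}[k]$. Actual balance $b_j[k]=\sum_{v_i\in\mathcal{N}_j^-}f_{ji}[k]-\sum_{v_l\in\mathcal{N}_j^+}f_{lj}[k]$; perceived balance $b^{(p)}_j[k]=\sum_{v_i\in\mathcal{N}_j^-}f^{(p)}_{ji}[k]-\sum_{v_l\in\mathcal{N}_j^+}f_{lj}[k]$;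 total imbalance $\varepsilon[k]=\sum_j|b_j[k]|$. Algorithm 1. Initialization: $f_{ji}[0]=f^{(p)}_{ji}[0]=\lceil l_{ji}\rceil$ for all edges; each $v_j$ fixes a cyclic order of its $\mathcal{D}_j$ incident (incoming and outgoing) edges and a pointer into it. Iteration $k=0,1,2,\dots$, at each node $v_j$: (1) compute $b^{(p)}_j[k]$. (2) If $b^{(p)}_j[k]>0$, starting at the pointer and cycling through the order, visit edges one at a time: at an outgoing edge $(v_l,v_j)$, if $f_{lj}[k]+c^{(j)}_{lj}[k]<\lfloor u_{lj}\rfloor$ add $1$ to $c^{(j)}_{lj}[k]$; at an incoming edge $(v_j,v_i)$, if $f^{(p)}_{ji}[k]+c^{(j)}_{ji}[k]>\lceil l_{ji}\rceil$ subtract $1$ from $c^{(j)}_{ji}[k]$ (the $c$'s start at $0$; edges at their limit are skipped); stop as soon as the total number of unit changes equals $b^{(p)}_j[k]$, leaving the pointer at the next edge. If $b^{(p)}_j[k]\le 0$, all $c^{(j)}[k]=0$. (3) $v_j$ transmits $c^{(j)}_{lj}[k]$ to each out-neighbor $v_l$ and $c^{(j)}_{ji}[k]$ to each in-neighbor $v_i$. A message sent at step $k$ over a link in a given direction is delivered at step $k+\tau$, where the integer $\tau\in[0,\overline{\tau}]$ is arbitrary (unknown, time-varying, independent across links and directions). (4) $v_j$ forms $\overline{c}^{(l)}_{lj}[k]$ (resp. $\overline{c}^{(i)}_{ji}[k]$) as the sum of all values $c^{(l)}_{lj}[k_0]$ (resp. $c^{(i)}_{ji}[k_0]$) sent by $v_l$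 (resp. $v_i$) that are delivered at step $k$ (zero if none). (5)–(6) $f_{lj}[k+1]=[f_{lj}[k]+c^{(j)}_{lj}[k]+\overline{c}^{(l)}_{lj}[k]]_{lj}$ and $f^{(p)}_{ji}[k+1]=[f^{(p)}_{ji}[k]+c^{(j)}_{ji}[k]+\overline{c}^{(i)}_{ji}[k]]_{ji}$. *)

theory Defs
  imports Complex_Main
begin

text \<open>Edges are pairs (a,b) meaning flow from b to a: the tail b holds the actual
flow, the head a holds the perceived flow.\<close>

definition proj :: "real \<Rightarrow> real \<Rightarrow> int \<Rightarrow> int" where
  "proj lo hi x = max (ceiling lo) (min (floor hi) x)"

text \<open>Outgoing edge (snd e = j): increase actual flow, must stay below floor u.
Incoming edge (fst e = j): decrease perceived flow, must stay above ceiling l.\<close>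
definition cap_ok :: "'v \<Rightarrow> ('v \<times> 'v \<Rightarrow> real) \<Rightarrow> ('v \<times> 'v \<Rightarrow> real)
    \<Rightarrow> ('v \<times> 'v \<Rightarrow> int) \<Rightarrow> ('v \<times> 'v \<Rightarrow> int) \<Rightarrow> ('v \<times> 'v \<Rightarrow> int) \<Rightarrow> 'v \<times> 'v \<Rightarrow> bool" where
  "cap_ok j l u f fp cc e =
     (if snd e = j then f e + cc e < floor (u e) else fp e + cc e > ceiling (l e))"

text \<open>One visit of the cyclic procedure; state = (pointer, tentative changes, remaining units).
Once no units remain (or no edge can change) the state is frozen.\<close>
definition visit :: "'v \<Rightarrow> ('v \<times> 'v) list \<Rightarrow> ('v \<times> 'v \<Rightarrow> real) \<Rightarrow> ('v \<times> 'v \<Rightarrow> real)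
    \<Rightarrow> ('v \<times> 'v \<Rightarrow> int) \<Rightarrow> ('v \<times> 'v \<Rightarrow> int)
    \<Rightarrow> nat \<times> ('v \<times> 'v \<Rightarrow> int) \<times> int \<Rightarrow> nat \<times> ('v \<times> 'v \<Rightarrow> int) \<times> int" where
  "visit j os l u f fp st =
     (case st of (pos, cc, r) \<Rightarrow>
       if r \<le> 0 \<or> (\<forall>e\<in>set os. \<not> cap_ok j l u f fp cc e) then (pos, cc, r)
       else (let e = os ! pos in
             if cap_ok j l u f fp cc e
             then (Suc pos mod length os,
                   cc(e := cc e + (if snd e = j then 1 else -1)), r - 1)
             else (Suc pos mod length os, cc, r)))"

text \<open>Step (2) of Algorithm 1 at node j: starting from pointer p with b = perceived balance,
returns the new pointer and the changes c^(j). Enough visits are made for the procedure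
to terminate (each round of |os| visits performs at least one unit change or freezes).\<close>
definition alloc :: "'v \<Rightarrow> ('v \<times> 'v) list \<Rightarrow> ('v \<times> 'v \<Rightarrow> real) \<Rightarrow> ('v \<times> 'v \<Rightarrow> real)
    \<Rightarrow> ('v \<times> 'v \<Rightarrow> int) \<Rightarrow> ('v \<times> 'v \<Rightarrow> int) \<Rightarrow> nat \<Rightarrow> int \<Rightarrow> nat \<times> ('v \<times> 'v \<Rightarrow> int)" where
  "alloc j os l u f fp p b =
     (case (visit j os l u f fp ^^ (length os * (nat b + 1))) (p, (\<lambda>_. 0), b) of
        (pos, cc, _) \<Rightarrow> (pos, cc))"

definition balance :: "('v \<times> 'v) set \<Rightarrow> ('v \<times> 'v \<Rightarrow> int) \<Rightarrow> 'v \<Rightarrow> int" where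
  "balance E f j = (\<Sum>e\<in>{e\<in>E. fst e = j}. f e) - (\<Sum>e\<in>{e\<in>E. snd e = j}. f e)"

definition pbalance :: "('v \<times> 'v) set \<Rightarrow> ('v \<times> 'v \<Rightarrow> int) \<Rightarrow> ('v \<times> 'v \<Rightarrow> int) \<Rightarrow> 'v \<Rightarrow> int" where
  "pbalance E f fp j = (\<Sum>e\<in>{e\<in>E. fst e = j}. fp e) - (\<Sum>e\<in>{e\<in>E. snd e = j}. f e)"

definition delivered :: "(nat \<Rightarrow> int) \<Rightarrow> (nat \<Rightarrow> nat) \<Rightarrow> nat \<Rightarrow> int" where
  "delivered msg d k = (\<Sum>k0\<in>{k0\<in>{..k}. k0 + d k0 = k}. msg k0)"

end

theory Submission
  imports Defs
begin

text \<open>Nodes only raise the actual flow on outgoing edges and lower the perceived flow on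
incoming edges, and the projections never bite: on every edge, the actual flow plus the head's
decreases still in transit equals the perceived flow plus the tail's increases still in transit,
which keeps both values within the bounds. At a node j, the actual balance corrected by its own
undelivered decreases dominates the perceived balance and drops in one step by at most the number
of unit changes j makes, itself at most the positive part of the perceived balance. Hence a
nonnegative corrected balance stays nonnegative; while it is negative j sends nothing, so nothing
of j is in transit and it equals the actual balance.\<close>

lemma sum_fun_upd_in:
  fixes h :: "'b \<Rightarrow> 'c::ab_group_add"
  assumes "finite A" and "x \<in> A"
  shows "(\<Sum>e\<in>A. h ((g(x := v)) e)) = (\<Sum>e\<in>A. h (g e)) - h (g x) + h v"
proof -
  have "(\<Sum>e\<in>A - {x}. h ((g(x := v)) e)) = (\<Sum>e\<in>A - {x}. h (g e))"
    by (rule sum.cong) auto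
  then show ?thesis
    using sum.remove[OF assms, of "\<lambda>e. h ((g(x := v)) e)"] sum.remove[OF assms, of "\<lambda>e. h (g e)"]
    by simp
qed

definition admissible_changes :: "'v \<Rightarrow> ('v \<times> 'v \<Rightarrow> real) \<Rightarrow> ('v \<times> 'v \<Rightarrow> real)
    \<Rightarrow> ('v \<times> 'v \<Rightarrow> int) \<Rightarrow> ('v \<times> 'v \<Rightarrow> int) \<Rightarrow> ('v \<times> 'v \<Rightarrow> int) \<Rightarrow> bool" where
  "admissible_changes j l u f fp cc \<longleftrightarrow>
     (\<forall>e. snd e = j \<longrightarrow> 0 \<le> cc e \<and> (0 < cc e \<longrightarrow> f e + cc e \<le> \<lfloor>u e\<rfloor>)) \<and>
     (\<forall>e. snd e \<noteq> j \<longrightarrow> cc e \<le> 0 \<and> (cc e < 0 \<longrightarrow> \<lceil>l e\<rceil> \<le> fp e + cc e))"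

lemma admissible_changes_outgoing:
  "admissible_changes j l u f fp cc \<Longrightarrow> snd e = j \<Longrightarrow> 0 \<le> cc e \<and> (0 < cc e \<longrightarrow> f e + cc e \<le> \<lfloor>u e\<rfloor>)"
  unfolding admissible_changes_def by blast

lemma admissible_changes_incoming:
  "admissible_changes j l u f fp cc \<Longrightarrow> snd e \<noteq> j \<Longrightarrow> cc e \<le> 0 \<and> (cc e < 0 \<longrightarrow> \<lceil>l e\<rceil> \<le> fp e + cc e)"
  unfolding admissible_changes_def by blast

definition alloc_state_inv :: "'v \<Rightarrow> ('v \<times> 'v) list \<Rightarrow> ('v \<times> 'v \<Rightarrow> real) \<Rightarrow> ('v \<times> 'v \<Rightarrow> real)
    \<Rightarrow> ('v \<times> 'v \<Rightarrow> int) \<Rightarrow> ('v \<times> 'v \<Rightarrow> int) \<Rightarrow> int \<Rightarrow> nat \<times> ('v \<times> 'v \<Rightarrow> int) \<times> int \<Rightarrow> bool" where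
  "alloc_state_inv j os l u f fp b st = (case st of (pos, cc, r) \<Rightarrow>
     pos < length os \<and> admissible_changes j l u f fp cc \<and>
     (\<Sum>e\<in>set os. \<bar>cc e\<bar>) = b - r \<and> (\<Sum>e\<in>set os. \<bar>cc e\<bar>) \<le> max b 0)"

lemma admissible_changes_unit_step:
  assumes adm: "admissible_changes j l u f fp cc" and cap: "cap_ok j l u f fp cc e"
  shows "admissible_changes j l u f fp (cc(e := cc e + (if snd e = j then 1 else -1)))"
proof -
  have "snd e = j \<Longrightarrow> 0 \<le> cc e" and "snd e \<noteq> j \<Longrightarrow> cc e \<le> 0"
    using admissible_changes_outgoing[OF adm] admissible_changes_incoming[OF adm] by auto
  then show ?thesis
    using adm cap unfolding admissible_changes_def cap_ok_def by (auto simp del: split_paired_All)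
qed

lemma visit_preserves_alloc_state_inv:
  assumes inv: "alloc_state_inv j os l u f fp b st"
  shows "alloc_state_inv j os l u f fp b (visit j os l u f fp st)"
proof -
  obtain pos cc r where st: "st = (pos, cc, r)" by (cases st) auto
  show ?thesis
  proof (cases "r \<le> 0 \<or> (\<forall>e\<in>set os. \<not> cap_ok j l u f fp cc e)")
    case True
    then show ?thesis using inv by (simp add: visit_def st)
  next
    case active: False
    then have "0 < r" and "os \<noteq> []" by auto
    with inv have pos: "pos < length os" and adm: "admissible_changes j l u f fp cc"
      and total: "(\<Sum>e\<in>set os. \<bar>cc e\<bar>) = b - r" and next_pos: "Suc pos mod length os < length os"
      by (auto simp: alloc_state_inv_def st)
    define e where "e = os ! pos"
    have e: "e \<in> set os" using pos by (simp add: e_def)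
    show ?thesis
    proof (cases "cap_ok j l u f fp cc e")
      case cap: True
      define v where "v = cc e + (if snd e = j then 1 else -1)"
      have "\<bar>v\<bar> = \<bar>cc e\<bar> + 1"
        using admissible_changes_outgoing[OF adm, of e] admissible_changes_incoming[OF adm, of e]
        by (auto simp: v_def)
      then have "(\<Sum>x\<in>set os. \<bar>(cc(e := v)) x\<bar>) = b - (r - 1)"
        using sum_fun_upd_in[of "set os" e abs cc v] e total by simp
      moreover have "visit j os l u f fp st = (Suc pos mod length os, cc(e := v), r - 1)"
        using active cap by (simp add: visit_def st e_def v_def Let_def)
      ultimately show ?thesis
        using admissible_changes_unit_step[OF adm cap] next_pos \<open>0 < r\<close>
        by (simp add: alloc_state_inv_def v_def)
    next
      case False
      then have "visit j os l u f fp st = (Suc pos mod length os, cc, r)"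
        using active by (auto simp: visit_def st e_def Let_def)
      then show ?thesis using inv next_pos by (simp add: alloc_state_inv_def st)
    qed
  qed
qed

lemma alloc_admissible:
  assumes "p < length os" and "alloc j os l u f fp p b = (p', cc)"
  shows "p' < length os" and "admissible_changes j l u f fp cc"
    and "(\<Sum>e\<in>set os. \<bar>cc e\<bar>) \<le> max b 0"
proof -
  have "alloc_state_inv j os l u f fp b (p, \<lambda>_. 0, b)"
    using assms(1) by (simp add: alloc_state_inv_def admissible_changes_def)
  then have "alloc_state_inv j os l u f fp b ((visit j os l u f fp ^^ n) (p, \<lambda>_. 0, b))" for n
    by (induction n) (auto intro: visit_preserves_alloc_state_inv)
  moreover obtain n r where "(visit j os l u f fp ^^ n) (p, \<lambda>_. 0, b) = (p', cc, r)"
    using assms(2) unfolding alloc_def by (auto split: prod.splits)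
  ultimately have "alloc_state_inv j os l u f fp b (p', cc, r)"
    by metis
  then show "p' < length os" and "admissible_changes j l u f fp cc"
    and "(\<Sum>e\<in>set os. \<bar>cc e\<bar>) \<le> max b 0"
    by (auto simp: alloc_state_inv_def)
qed

definition in_flight :: "(nat \<Rightarrow> int) \<Rightarrow> (nat \<Rightarrow> nat) \<Rightarrow> nat \<Rightarrow> int" where
  "in_flight msg d k = (\<Sum>k0\<in>{k0. k0 < k \<and> k \<le> k0 + d k0}. msg k0)"

lemma in_flight_0 [simp]: "in_flight msg d 0 = 0"
  by (simp add: in_flight_def)

lemma in_flight_Suc: "in_flight msg d (Suc k) + delivered msg d k = in_flight msg d k + msg k"
proof -
  have "in_flight msg d (Suc k) + delivered msg d k
      = (\<Sum>k0\<in>{..k}. (if Suc k \<le> k0 + d k0 then msg k0 else 0) + (if k0 + d k0 = k then msg k0 else 0))"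
    unfolding in_flight_def delivered_def sum.distrib
    by (simp add: sum.inter_filter[symmetric] less_Suc_eq_le conj_commute)
  also have "\<dots> = (\<Sum>k0\<in>{..k}. (if k0 < k \<and> k \<le> k0 + d k0 then msg k0 else 0) + (if k0 = k then msg k0 else 0))"
    by (rule sum.cong) auto
  also have "\<dots> = in_flight msg d k + msg k"
    unfolding in_flight_def sum.distrib
    by (simp add: sum.inter_filter[symmetric] conj_commute) (rule sum.cong; auto)
  finally show ?thesis .
qed

lemma proj_eq_self: "\<lceil>lo\<rceil> \<le> x \<Longrightarrow> x \<le> max \<lceil>lo\<rceil> \<lfloor>hi\<rfloor> \<Longrightarrow> proj lo hi x = x"
  unfolding proj_def by auto

text \<open>The flow along one edge: \<open>ch\<close> and \<open>ct\<close> are the changes sent by its head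
(which holds \<open>fp\<close>) and by its tail (which holds \<open>f\<close>).\<close>

locale edge_run =
  fixes lo hi :: real
    and f fp :: "nat \<Rightarrow> int"
    and ch ct :: "nat \<Rightarrow> int"
    and dH dT :: "nat \<Rightarrow> nat"
  assumes f_0: "f 0 = \<lceil>lo\<rceil>" and fp_0: "fp 0 = \<lceil>lo\<rceil>"
    and ch_nonpos: "ch k \<le> 0" and ch_bound: "ch k < 0 \<Longrightarrow> \<lceil>lo\<rceil> \<le> fp k + ch k"
    and ct_nonneg: "0 \<le> ct k" and ct_bound: "0 < ct k \<Longrightarrow> f k + ct k \<le> \<lfloor>hi\<rfloor>"
    and f_Suc_proj: "f (Suc k) = proj lo hi (f k + ct k + delivered ch dH k)"
    and fp_Suc_proj: "fp (Suc k) = proj lo hi (fp k + ch k + delivered ct dT k)"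
begin

lemma delivered_ch_nonpos: "delivered ch dH k \<le> 0"
  unfolding delivered_def by (rule sum_nonpos) (rule ch_nonpos)

lemma delivered_ct_nonneg: "0 \<le> delivered ct dT k"
  unfolding delivered_def by (rule sum_nonneg) (rule ct_nonneg)

lemma in_flight_ch_nonpos: "in_flight ch dH k \<le> 0"
  unfolding in_flight_def by (rule sum_nonpos) (rule ch_nonpos)

lemma in_flight_ct_nonneg: "0 \<le> in_flight ct dT k"
  unfolding in_flight_def by (rule sum_nonneg) (rule ct_nonneg)

definition edge_inv :: "nat \<Rightarrow> bool" where
  "edge_inv k \<longleftrightarrow> \<lceil>lo\<rceil> \<le> fp k \<and> f k \<le> max \<lceil>lo\<rceil> \<lfloor>hi\<rfloor> \<and>
     f k + in_flight ch dH k = fp k + in_flight ct dT k"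

lemma exact_steps_if_edge_inv:
  assumes "edge_inv k"
  shows "f (Suc k) = f k + ct k + delivered ch dH k"
    and "fp (Suc k) = fp k + ch k + delivered ct dT k"
proof -
  let ?F = "f k + ct k + delivered ch dH k" and ?P = "fp k + ch k + delivered ct dT k"
  have conserved: "?F + in_flight ch dH (Suc k) = ?P + in_flight ct dT (Suc k)"
    using assms in_flight_Suc[of ch dH k] in_flight_Suc[of ct dT k] by (simp add: edge_inv_def)
  have "\<lceil>lo\<rceil> \<le> fp k + ch k"
    using assms ch_bound[of k] ch_nonpos[of k] by (cases "ch k < 0") (auto simp: edge_inv_def)
  moreover have "f k + ct k \<le> max \<lceil>lo\<rceil> \<lfloor>hi\<rfloor>"
    using assms ct_bound[of k] ct_nonneg[of k] by (cases "0 < ct k") (auto simp: edge_inv_def)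
  moreover note conserved delivered_ch_nonpos[of k] delivered_ct_nonneg[of k]
    in_flight_ch_nonpos[of "Suc k"] in_flight_ct_nonneg[of "Suc k"]
  ultimately have "\<lceil>lo\<rceil> \<le> ?F" "?F \<le> max \<lceil>lo\<rceil> \<lfloor>hi\<rfloor>" "\<lceil>lo\<rceil> \<le> ?P" "?P \<le> max \<lceil>lo\<rceil> \<lfloor>hi\<rfloor>"
    by linarith+
  then show "f (Suc k) = ?F" and "fp (Suc k) = ?P"
    by (simp_all add: f_Suc_proj fp_Suc_proj proj_eq_self)
qed

lemma edge_inv: "edge_inv k"
proof (induction k)
  case 0
  then show ?case by (simp add: edge_inv_def f_0 fp_0)
next
  case (Suc k)
  have "\<lceil>lo\<rceil> \<le> fp (Suc k)" and "f (Suc k) \<le> max \<lceil>lo\<rceil> \<lfloor>hi\<rfloor>"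
    by (simp_all add: f_Suc_proj fp_Suc_proj proj_def)
  moreover have "f (Suc k) + in_flight ch dH (Suc k) = fp (Suc k) + in_flight ct dT (Suc k)"
    using Suc exact_steps_if_edge_inv[OF Suc] in_flight_Suc[of ch dH k] in_flight_Suc[of ct dT k]
    by (simp add: edge_inv_def)
  ultimately show ?case by (simp add: edge_inv_def)
qed

lemma f_Suc: "f (Suc k) = f k + ct k + delivered ch dH k"
  using exact_steps_if_edge_inv(1)[OF edge_inv] .

lemma fp_eq: "fp k = f k + in_flight ch dH k - in_flight ct dT k"
  using edge_inv[of k] by (simp add: edge_inv_def)

end

lemma nonneg_persists_with_pending_debits:
  fixes bal P s :: "nat \<Rightarrow> int"
  assumes P_0: "P 0 = 0" and P_nonpos: "\<And>k. P k \<le> 0"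
    and idle_mono: "\<And>k. s k = 0 \<Longrightarrow> P k \<le> P (Suc k)"
    and s_nonneg: "\<And>k. 0 \<le> s k" and s_bound: "\<And>k. s k \<le> max (bal k + P k) 0"
    and step: "\<And>k. bal k + P k - s k \<le> bal (Suc k) + P (Suc k)"
    and "0 \<le> bal k"
  shows "0 \<le> bal (Suc k)"
proof -
  have no_debits: "bal k + P k < 0 \<Longrightarrow> P k = 0" for k
  proof (induction k)
    case 0
    show ?case by (rule P_0)
  next
    case (Suc k)
    have "bal k + P k < 0"
      using Suc.prems step[of k] s_bound[of k] by linarith
    with Suc.IH s_bound[of k] s_nonneg[of k] have "P k = 0" and "s k = 0"
      by auto
    then show ?case
      using idle_mono[of k] P_nonpos[of "Suc k"] by linarith
  qed
  have "0 \<le> bal k + P k"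
    using no_debits[of k] \<open>0 \<le> bal k\<close> by linarith
  then have "0 \<le> bal (Suc k) + P (Suc k)"
    using step[of k] s_bound[of k] by linarith
  then show ?thesis
    using P_nonpos[of "Suc k"] by linarith
qed

locale flow_balancing_run =
  fixes V :: "'v set" and E :: "('v \<times> 'v) set"
    and l u :: "'v \<times> 'v \<Rightarrow> real"
    and ord :: "'v \<Rightarrow> ('v \<times> 'v) list"
    and dH dT :: "'v \<times> 'v \<Rightarrow> nat \<Rightarrow> nat"
    and f fp :: "nat \<Rightarrow> 'v \<times> 'v \<Rightarrow> int"
    and ptr :: "nat \<Rightarrow> 'v \<Rightarrow> nat"
    and c :: "nat \<Rightarrow> 'v \<Rightarrow> 'v \<times> 'v \<Rightarrow> int"
  assumes finite_E: "finite E" and E_subset: "E \<subseteq> V \<times> V" and no_loop: "(v, v) \<notin> E"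
    and set_ord: "j \<in> V \<Longrightarrow> set (ord j) = {e\<in>E. fst e = j \<or> snd e = j}"
    and ptr_0: "j \<in> V \<Longrightarrow> ptr 0 j < length (ord j)"
    and f_0: "e \<in> E \<Longrightarrow> f 0 e = \<lceil>l e\<rceil>" and fp_0: "e \<in> E \<Longrightarrow> fp 0 e = \<lceil>l e\<rceil>"
    and step_alloc: "j \<in> V \<Longrightarrow> (ptr (Suc k) j, c k j) =
        alloc j (ord j) l u (f k) (fp k) (ptr k j) (pbalance E (f k) (fp k) j)"
    and step_f: "e \<in> E \<Longrightarrow> f (Suc k) e =
        proj (l e) (u e) (f k e + c k (snd e) e + delivered (\<lambda>k0. c k0 (fst e) e) (dH e) k)"
    and step_fp: "e \<in> E \<Longrightarrow> fp (Suc k) e =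
        proj (l e) (u e) (fp k e + c k (fst e) e + delivered (\<lambda>k0. c k0 (snd e) e) (dT e) k)"
begin

lemma ptr_bound: "j \<in> V \<Longrightarrow> ptr k j < length (ord j)"
  by (induction k) (auto intro: alloc_admissible(1) ptr_0 step_alloc[symmetric])

lemma admissible_c: "j \<in> V \<Longrightarrow> admissible_changes j l u (f k) (fp k) (c k j)"
  using alloc_admissible(2)[OF ptr_bound step_alloc[symmetric]] .

lemma sum_abs_c_le: "j \<in> V \<Longrightarrow> (\<Sum>e\<in>set (ord j). \<bar>c k j e\<bar>) \<le> max (pbalance E (f k) (fp k) j) 0"
  using alloc_admissible(3)[OF ptr_bound step_alloc[symmetric]] .

lemma edge_run:
  assumes "e \<in> E"
  shows "edge_run (l e) (u e) (\<lambda>k. f k e) (\<lambda>k. fp k e) (\<lambda>k. c k (fst e) e) (\<lambda>k. c k (snd e) e) (dH e) (dT e)"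
proof -
  have "fst e \<in> V" "snd e \<in> V" "snd e \<noteq> fst e"
    using assms E_subset no_loop[of "fst e"] by auto
  then show ?thesis
    using assms admissible_changes_incoming[OF admissible_c] admissible_changes_outgoing[OF admissible_c]
    by unfold_locales (simp_all add: f_0 fp_0 step_f step_fp)
qed

definition pending :: "'v \<Rightarrow> nat \<Rightarrow> int" where
  "pending j k = (\<Sum>e\<in>{e\<in>E. fst e = j}. in_flight (\<lambda>k0. c k0 j e) (dH e) k)"

lemma pending_0: "pending j 0 = 0"
  by (simp add: pending_def)

lemma pending_nonpos: "pending j k \<le> 0"
  unfolding pending_def by (rule sum_nonpos) (auto intro: edge_run.in_flight_ch_nonpos[OF edge_run])

lemma pending_mono_if_idle:
  assumes "j \<in> V" and idle: "(\<Sum>e\<in>set (ord j). \<bar>c k j e\<bar>) = 0"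
  shows "pending j k \<le> pending j (Suc k)"
  unfolding pending_def
proof (rule sum_mono)
  fix e assume "e \<in> {e\<in>E. fst e = j}"
  then have e: "e \<in> E" and "fst e = j" by auto
  have "e \<in> set (ord j)"
    using set_ord[OF \<open>j \<in> V\<close>] e \<open>fst e = j\<close> by auto
  then have "c k j e = 0"
    using idle by (simp add: sum_nonneg_eq_0_iff)
  then show "in_flight (\<lambda>k0. c k0 j e) (dH e) k \<le> in_flight (\<lambda>k0. c k0 j e) (dH e) (Suc k)"
    using in_flight_Suc[of "\<lambda>k0. c k0 j e" "dH e" k] \<open>fst e = j\<close>
      edge_run.delivered_ch_nonpos[OF edge_run[OF e], of k]
    by simp
qed

lemma pbalance_le_corrected_balance: "pbalance E (f k) (fp k) j \<le> balance E (f k) j + pending j k"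
proof -
  have "(\<Sum>e\<in>{e\<in>E. fst e = j}. fp k e) \<le> (\<Sum>e\<in>{e\<in>E. fst e = j}. f k e + in_flight (\<lambda>k0. c k0 j e) (dH e) k)"
  proof (rule sum_mono)
    fix e assume "e \<in> {e\<in>E. fst e = j}"
    then have e: "e \<in> E" and "fst e = j" by auto
    then show "fp k e \<le> f k e + in_flight (\<lambda>k0. c k0 j e) (dH e) k"
      using edge_run.fp_eq[OF edge_run[OF e], of k] edge_run.in_flight_ct_nonneg[OF edge_run[OF e], of k]
      by simp
  qed
  then show ?thesis
    by (simp add: pbalance_def balance_def pending_def sum.distrib)
qed

lemma corrected_balance_step:
  assumes "j \<in> V"
  shows "balance E (f k) j + pending j k - (\<Sum>e\<in>set (ord j). \<bar>c k j e\<bar>)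
    \<le> balance E (f (Suc k)) j + pending j (Suc k)"
proof -
  let ?In = "{e\<in>E. fst e = j}" and ?Out = "{e\<in>E. snd e = j}"
  let ?P = "\<lambda>k e. in_flight (\<lambda>k0. c k0 j e) (dH e) k"
  have "(\<Sum>e\<in>?In. f k e + ?P k e - \<bar>c k j e\<bar>) \<le> (\<Sum>e\<in>?In. f (Suc k) e + ?P (Suc k) e)"
  proof (rule sum_mono)
    fix e assume "e \<in> ?In"
    then have e: "e \<in> E" and "fst e = j" by auto
    then show "f k e + ?P k e - \<bar>c k j e\<bar> \<le> f (Suc k) e + ?P (Suc k) e"
      using edge_run.f_Suc[OF edge_run[OF e], of k] edge_run.ct_nonneg[OF edge_run[OF e], of k]
        in_flight_Suc[of "\<lambda>k0. c k0 j e" "dH e" k]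
      by simp
  qed
  moreover have "(\<Sum>e\<in>?Out. f (Suc k) e) \<le> (\<Sum>e\<in>?Out. f k e + \<bar>c k j e\<bar>)"
  proof (rule sum_mono)
    fix e assume "e \<in> ?Out"
    then have e: "e \<in> E" and "snd e = j" by auto
    then show "f (Suc k) e \<le> f k e + \<bar>c k j e\<bar>"
      using edge_run.f_Suc[OF edge_run[OF e], of k] edge_run.delivered_ch_nonpos[OF edge_run[OF e], of k]
      by simp
  qed
  moreover have "(\<Sum>e\<in>set (ord j). \<bar>c k j e\<bar>) = (\<Sum>e\<in>?In. \<bar>c k j e\<bar>) + (\<Sum>e\<in>?Out. \<bar>c k j e\<bar>)"
  proof -
    have "set (ord j) = ?In \<union> ?Out" and "?In \<inter> ?Out = {}"
      using set_ord[OF assms] no_loop by auto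
    then show ?thesis
      using finite_E by (simp add: sum.union_disjoint)
  qed
  ultimately show ?thesis
    unfolding balance_def pending_def sum.distrib sum_subtractf by linarith
qed

lemma balance_nonneg_Suc:
  assumes "j \<in> V" and "0 \<le> balance E (f k) j"
  shows "0 \<le> balance E (f (Suc k)) j"
proof (rule nonneg_persists_with_pending_debits[where P = "pending j" and s = "\<lambda>k. \<Sum>e\<in>set (ord j). \<bar>c k j e\<bar>"])
  show "(\<Sum>e\<in>set (ord j). \<bar>c k' j e\<bar>) \<le> max (balance E (f k') j + pending j k') 0" for k'
    using sum_abs_c_le[OF assms(1), of k'] pbalance_le_corrected_balance[of k' j] by linarith
qed (use assms pending_0 pending_nonpos pending_mono_if_idle corrected_balance_step
      in \<open>auto intro: sum_nonneg\<close>)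

end

theorem proposition2:
  fixes V :: "'v set" and E :: "('v \<times> 'v) set"
    and l u :: "'v \<times> 'v \<Rightarrow> real"
    and ord :: "'v \<Rightarrow> ('v \<times> 'v) list"
    and taubar :: nat
    and dH dT :: "'v \<times> 'v \<Rightarrow> nat \<Rightarrow> nat"
    and f fp :: "nat \<Rightarrow> 'v \<times> 'v \<Rightarrow> int"
    and ptr :: "nat \<Rightarrow> 'v \<Rightarrow> nat"
    and c :: "nat \<Rightarrow> 'v \<Rightarrow> 'v \<times> 'v \<Rightarrow> int"
  assumes finV: "finite V" and card: "card V \<ge> 2"
    and EV: "E \<subseteq> V \<times> V" and noloop: "\<forall>v. (v, v) \<notin> E"
    and strong: "\<forall>x\<in>V. \<forall>y\<in>V. (x, y) \<in> E\<^sup>*"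
    and bounds: "\<forall>e\<in>E. 1 \<le> l e \<and> l e \<le> u e"
    and ord_ok: "\<forall>j\<in>V. distinct (ord j) \<and> set (ord j) = {e\<in>E. fst e = j \<or> snd e = j}"
    and ptr0: "\<forall>j\<in>V. ptr 0 j < length (ord j)"
    and delays: "\<forall>e\<in>E. \<forall>k. dH e k \<le> taubar \<and> dT e k \<le> taubar"
    and init: "\<forall>e\<in>E. f 0 e = ceiling (l e) \<and> fp 0 e = ceiling (l e)"
    and step_alloc: "\<forall>k. \<forall>j\<in>V. (ptr (Suc k) j, c k j) =
        alloc j (ord j) l u (f k) (fp k) (ptr k j) (pbalance E (f k) (fp k) j)"
    and step_f: "\<forall>k. \<forall>e\<in>E. f (Suc k) e =
        proj (l e) (u e) (f k e + c k (snd e) e + delivered (\<lambda>k0. c k0 (fst e) e) (dH e) k)"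
    and step_fp: "\<forall>k. \<forall>e\<in>E. fp (Suc k) e =
        proj (l e) (u e) (fp k e + c k (fst e) e + delivered (\<lambda>k0. c k0 (snd e) e) (dT e) k)"
  shows "\<forall>k. {j\<in>V. balance E (f (Suc k)) j < 0} \<subseteq> {j\<in>V. balance E (f k) j < 0}"
proof -
  have "finite E"
    using finite_subset[OF EV] finV by blast
  then interpret flow_balancing_run V E l u ord dH dT f fp ptr c
    using EV noloop ord_ok ptr0 init step_alloc step_f step_fp by unfold_locales auto
  show ?thesis
  proof (intro allI subsetI)
    fix k j
    assume "j \<in> {j \<in> V. balance E (f (Suc k)) j < 0}"
    then show "j \<in> {j \<in> V. balance E (f k) j < 0}"
      using balance_nonneg_Suc[of j k] by (auto simp: not_le[symmetric])
  qed
qed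

end
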